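(* For all positive integers $n$ and $j$, $L_n(j)=A_n\big(10+6(j-1)\big)$.
   Context: The continued fraction $[a_1;a_2:\dots:a_k]$ means $a_1+1/(a_2+1/(\cdots+1/a_k))$. For a sequence $(a_1,\dots,a_k)$ of positive integers with $k\ge2$, $\breve K(a_1,\dots,a_k)$ is the integer $c$ where $[a_1;a_2:\dots:a_{k-1}]=c/d$ with $\gcd(c,d)=1$, $c,d>0$ (the last entry $a_k$ is omitted). For a positive integer $n$ let $a_n=n^2+3$, $b_n=n^4+5n^2+5$, $l_n=(na_n)^2+2$. Define $L_n(1)=\breve K(na_n,na_n,nb_n,nb_n)$, $L_n(2)=\breve K(na_n,na_n,na_n,na_n,nb_n,nb_n)$, and $L_n(j)=l_nL_n(j-1)-L_n(j-2)$ for $j>2$. Define $A_n(1)=1$, $A_n(2)=n(n^2+4)$, and $A_n(j)=nA_n(j-1)+A_n(j-2)$ for $j>2$. *)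

theory Defs
  imports Complex_Main
begin

fun cfrac :: "nat list \<Rightarrow> rat" where
  "cfrac [] = 0"
| "cfrac [a] = of_nat a"
| "cfrac (a # b # rest) = of_nat a + 1 / cfrac (b # rest)"

definition Kbreve :: "nat list \<Rightarrow> int" where
  "Kbreve xs = fst (quotient_of (cfrac (butlast xs)))"

definition aa :: "nat \<Rightarrow> nat" where "aa n = n^2 + 3"
definition bb :: "nat \<Rightarrow> nat" where "bb n = n^4 + 5*n^2 + 5"
definition ll :: "nat \<Rightarrow> int" where "ll n = int ((n * aa n)^2 + 2)"

fun Lseq :: "nat \<Rightarrow> nat \<Rightarrow> int" where
  "Lseq n 0 = 0"
| "Lseq n (Suc 0) = Kbreve [n * aa n, n * aa n, n * bb n, n * bb n]"
| "Lseq n (Suc (Suc 0)) =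
     Kbreve [n * aa n, n * aa n, n * aa n, n * aa n, n * bb n, n * bb n]"
| "Lseq n (Suc (Suc (Suc j))) = ll n * Lseq n (Suc (Suc j)) - Lseq n (Suc j)"

fun Aseq :: "nat \<Rightarrow> nat \<Rightarrow> int" where
  "Aseq n 0 = 0"
| "Aseq n (Suc 0) = 1"
| "Aseq n (Suc (Suc 0)) = int (n * (n^2 + 4))"
| "Aseq n (Suc (Suc (Suc j))) = int n * Aseq n (Suc (Suc j)) + Aseq n (Suc j)"

end

theory Submission
  imports Defs
begin

text \<open>The continued fractions are evaluated through
  their convergents, which for positive entries are already in lowest terms, so \<open>L_n(1)\<close> and
  \<open>L_n(2)\<close> become explicit polynomials in \<open>n\<close> agreeing with \<open>A_n(10)\<close> and \<open>A_n(16)\<close>.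
  If \<open>x(k+2) = c x(k+1) + x(k)\<close>, then \<open>x(k+6) = (c^3 + 3c) x(k+3) + x(k)\<close> and
  \<open>x(k+4) = (c^2 + 2) x(k+2) - x(k)\<close>; combining the two for the stride-3 subsequence gives
  \<open>x(k+12) = ((c^3 + 3c)^2 + 2) x(k+6) - x(k)\<close>, and for \<open>c = n\<close> the coefficient is
  \<open>(n a_n)^2 + 2 = l_n\<close>.  So \<open>j \<mapsto> A_n(10 + 6(j-1))\<close> obeys the defining recurrence of \<open>L_n\<close>.\<close>

fun cfrac_convergent :: "nat list \<Rightarrow> int \<times> int" where
  "cfrac_convergent [] = (0, 1)"
| "cfrac_convergent [a] = (int a, 1)"
| "cfrac_convergent (a # b # rest) =
     (let (p, q) = cfrac_convergent (b # rest) in (int a * p + q, p))"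

lemma cfrac_convergent_correct:
  assumes "xs \<noteq> []" and "\<forall>a \<in> set xs. a > 0"
  shows "cfrac xs = of_int (fst (cfrac_convergent xs)) / of_int (snd (cfrac_convergent xs))
    \<and> fst (cfrac_convergent xs) > 0 \<and> snd (cfrac_convergent xs) > 0
    \<and> coprime (fst (cfrac_convergent xs)) (snd (cfrac_convergent xs))"
  using assms
proof (induction xs rule: cfrac_convergent.induct)
  case (2 a)
  then show ?case by simp
next
  case (3 a b rest)
  obtain p q where pq: "cfrac_convergent (b # rest) = (p, q)" by force
  with 3 have IH: "cfrac (b # rest) = of_int p / of_int q" "p > 0" "q > 0" "coprime p q"
    by auto
  have "a > 0" using "3.prems" by simp
  have "cfrac (a # b # rest) = of_nat a + 1 / (of_int p / of_int q)"
    by (simp add: IH(1))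
  also have "\<dots> = of_int (int a * p + q) / of_int p"
    using IH(2,3) by (simp add: field_simps)
  finally have "cfrac (a # b # rest) = of_int (int a * p + q) / of_int p" .
  moreover have "coprime (int a * p + q) p"
    using IH(4) by (simp add: coprime_iff_gcd_eq_1 gcd.commute gcd_add_mult)
  ultimately show ?case
    using IH \<open>a > 0\<close> pq by (simp add: add_pos_pos)
qed simp

lemma quotient_of_int_div:
  assumes "q > 0" and "coprime p q"
  shows "quotient_of (of_int p / of_int q) = (p, q)"
  using assms by (simp add: Fract_of_int_quotient[symmetric] quotient_of_Fract)

lemma quotient_of_cfrac:
  assumes "xs \<noteq> []" and "\<forall>a \<in> set xs. a > 0"
  shows "quotient_of (cfrac xs) = cfrac_convergent xs"
proof -
  obtain p q where pq: "cfrac_convergent xs = (p, q)" by force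
  with cfrac_convergent_correct[OF assms]
  have "cfrac xs = of_int p / of_int q" "q > 0" "coprime p q" by simp_all
  then show ?thesis by (simp add: pq quotient_of_int_div)
qed

lemma Kbreve_eq_convergent:
  assumes "length xs \<ge> 2" and "\<forall>a \<in> set xs. a > 0"
  shows "Kbreve xs = fst (cfrac_convergent (butlast xs))"
proof -
  have "butlast xs \<noteq> []" using assms(1) by (cases xs) auto
  moreover have "\<forall>a \<in> set (butlast xs). a > 0" using assms(2) by (auto dest: in_set_butlastD)
  ultimately show ?thesis by (simp add: Kbreve_def quotient_of_cfrac)
qed

lemma linear_recurrence_step2:
  fixes x :: "nat \<Rightarrow> 'a :: comm_ring_1"
  assumes rec: "\<And>k. x (k + 2) = c * x (k + 1) + x k"
  shows "x (k + 4) = (c\<^sup>2 + 2) * x (k + 2) - x k"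
proof -
  have rec': "x (Suc (Suc i)) = c * x (Suc i) + x i" for i
    using rec[of i] by simp
  show ?thesis by (simp add: rec' numeral_eq_Suc algebra_simps power2_eq_square)
qed

lemma linear_recurrence_step3:
  fixes x :: "nat \<Rightarrow> 'a :: comm_ring_1"
  assumes rec: "\<And>k. x (k + 2) = c * x (k + 1) + x k"
  shows "x (k + 6) = (c ^ 3 + 3 * c) * x (k + 3) + x k"
proof -
  have rec': "x (Suc (Suc i)) = c * x (Suc i) + x i" for i
    using rec[of i] by simp
  show ?thesis by (simp add: rec' numeral_eq_Suc algebra_simps power3_eq_cube)
qed

lemma linear_recurrence_step6:
  fixes x :: "nat \<Rightarrow> 'a :: comm_ring_1"
  assumes rec: "\<And>k. x (k + 2) = c * x (k + 1) + x k"
  shows "x (k + 12) = ((c ^ 3 + 3 * c)\<^sup>2 + 2) * x (k + 6) - x k"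
proof -
  have "x (k + 3 * i + 6) = (c ^ 3 + 3 * c) * x (k + 3 * i + 3) + x (k + 3 * i)" for i
    using linear_recurrence_step3[OF rec] .
  then have "x (k + 3 * (i + 2)) = (c ^ 3 + 3 * c) * x (k + 3 * (i + 1)) + x (k + 3 * i)" for i
    by (simp add: algebra_simps)
  from linear_recurrence_step2[where x = "\<lambda>i. x (k + 3 * i)", OF this, of 0]
  show ?thesis by simp
qed

lemma Aseq_recurrence_step6: "Aseq n (k + 13) = ll n * Aseq n (k + 7) - Aseq n (k + 1)"
proof -
  have "Aseq n (Suc (k + 2)) = int n * Aseq n (Suc (k + 1)) + Aseq n (Suc k)" for k
    by simp
  from linear_recurrence_step6[where x = "\<lambda>k. Aseq n (Suc k)", OF this, of k]
  show ?thesis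
    by (simp add: ll_def aa_def algebra_simps power2_eq_square power3_eq_cube)
qed

lemma Lseq_1: "n \<ge> 1 \<Longrightarrow> Lseq n 1 = Aseq n 10"
  by (simp add: Kbreve_eq_convergent aa_def bb_def eval_nat_numeral algebra_simps)

lemma Lseq_2: "n \<ge> 1 \<Longrightarrow> Lseq n 2 = Aseq n 16"
  by (simp add: numeral_2_eq_2 Kbreve_eq_convergent aa_def bb_def eval_nat_numeral algebra_simps)

theorem lemma5:
  fixes n j :: nat
  assumes "n \<ge> 1" and "j \<ge> 1"
  shows "Lseq n j = Aseq n (10 + 6 * (j - 1))"
proof -
  have "Lseq n (Suc i) = Aseq n (10 + 6 * i) \<and> Lseq n (Suc (Suc i)) = Aseq n (16 + 6 * i)" for i
  proof (induction i)
    case 0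
    then show ?case using Lseq_1[OF assms(1)] Lseq_2[OF assms(1)] by (simp add: numeral_2_eq_2)
  next
    case (Suc i)
    have "Lseq n (Suc (Suc (Suc i))) = ll n * Lseq n (Suc (Suc i)) - Lseq n (Suc i)" by simp
    also have "\<dots> = ll n * Aseq n ((9 + 6 * i) + 7) - Aseq n ((9 + 6 * i) + 1)"
      using Suc.IH by simp
    also have "\<dots> = Aseq n ((9 + 6 * i) + 13)" by (rule Aseq_recurrence_step6[symmetric])
    finally show ?case using Suc.IH by simp
  qed
  then show ?thesis using assms(2) by (cases j) auto
qed

end
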